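(* Let $\mathbb{X}$ be a Banach space, $\varphi:\mathbb{X}\to\mathbb{R}\cup\{+\infty\}$ a proper lower semicontinuous function, $\mathbf{S}_\varphi:=\{x\in\mathbb{X}:\varphi(x)\le0\}$, and $\bar x\in\mathbf{S}_\varphi$. (i) Suppose that $\mathbf{S}_\varphi$ has the Shapiro first order contact property around $\bar x$ and that the inequality $\varphi(x)\le0$ has a local error bound at $\bar x$. Then there exist $\tau,r\in(0,+\infty)$ such that $$\mathbf{e}\big(\{h\in\mathbb{X}:\varphi'_H(x;h)\le1\},\ \mathbf{T}^{\mathbf B}(\mathbf{S}_\varphi,x)\big)\le\tau \qquad(\ast)$$ holds for all $x\in\mathbf{S}_\varphi\cap\mathbf{B}(\bar x,r)$ with $\varphi(x)=0$. (ii) Suppose that ${\rm bd}(\mathbf{S}_\varphi)\subseteq\varphi^{-1}(0)$, that $\varphi$ has the epigraphical Shapiro first order contact property at $\bar x$, and that there exist $\tau,r\in(0,+\infty)$ such that $(\ast)$ holds for all $x\in{\rm bd}(\mathbf{S}_\varphi)\cap\mathbf{B}(\bar x,r)$. Then the inequality $\varphi(x)\le0$ has a local error bound at $\bar x$.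
   Context: $\mathbf{B}(a,\delta)$ is the open ball with center $a$ and radius $\delta$; ${\rm bd}$ denotes boundary; $\mathbf{d}(x,D):=\inf\{\|x-y\|:y\in D\}$. Excess: for $C,D\subseteq\mathbb{X}$, $\mathbf{e}(C,D):=\sup_{x\in C}\mathbf{d}(x,D)$, with $\mathbf{e}(\emptyset,D)=0$ if $D\ne\emptyset$ and $=\infty$ otherwise. Lower Hadamard directional derivative: $\varphi'_H(x;h):=\liminf_{t\to0^+,\,h'\to h}\frac{\varphi(x+th')-\varphi(x)}{t}$. For a closed set $C$ and $c\in C$, the Bouligand tangent cone $\mathbf{T}^{\mathbf B}(C,c)$ is the set of all $v$ for which there exist $v_n\to v$, $t_n\downarrow0$ with $c+t_nv_n\in C$ for all $n$. A closed set $C$ has the Shapiro first order contact property at $a\in C$ if for every $\varepsilon>0$ there is $\delta>0$ with $\mathbf{d}(x-u,\mathbf{T}^{\mathbf B}(C,u))\le\varepsilon\|x-u\|$ for all $x,u\in C\cap\mathbf{B}(a,\delta)$; it has this property around $\bar x$ if there is a neighborhood $U$ of $\bar x$ such that it has the property at every point of $C\cap U$. $\varphi$ has the epigraphical Shapiro first order contact property at $\bar x\in{\rm dom}\,\varphi$ if ${\rm epi}(\varphi)=\{(x,\alpha)\in\mathbb{X}\times\mathbb{R}:\varphi(x)\le\alpha\}$ (with norm $\|(x,\alpha)\|=\|x\|+|\alpha|$) has the Shapiro first order contact property at $(\bar x,\varphi(\bar x))$. The inequality $\varphi(x)\le0$ has a local error bound at $\bar x\in\mathbf{S}_\varphi$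 if there exist $\tau,\delta\in(0,+\infty)$ with $\mathbf{d}(x,\mathbf{S}_\varphi)\le\tau\max\{\varphi(x),0\}$ for all $x\in\mathbf{B}(\bar x,\delta)$. *)

theory Defs
  imports "HOL-Analysis.Analysis" "HOL-Library.Extended_Real"
begin

text \<open>Extended-real valued functions \<open>\<phi> : X \<Rightarrow> \<real> \<union> {+\<infinity>}\<close> are modelled as
  functions into ereal that never take the value \<open>-\<infinity>\<close>.\<close>

definition proper_fun :: "('a \<Rightarrow> ereal) \<Rightarrow> bool" where
  "proper_fun \<phi> \<longleftrightarrow> (\<forall>x. \<phi> x \<noteq> -\<infinity>) \<and> (\<exists>x. \<phi> x < \<infinity>)"

definition lsc_fun :: "('a::topological_space \<Rightarrow> ereal) \<Rightarrow> bool" where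
  "lsc_fun \<phi> \<longleftrightarrow> (\<forall>x. \<phi> x \<le> Liminf (at x) \<phi>)"

definition sublevel0 :: "('a \<Rightarrow> ereal) \<Rightarrow> 'a set" where
  "sublevel0 \<phi> = {x. \<phi> x \<le> 0}"

definition excess :: "'a::metric_space set \<Rightarrow> 'a set \<Rightarrow> ereal" where
  "excess C D = (if D = {} then \<infinity> else if C = {} then 0
                 else (SUP x\<in>C. ereal (infdist x D)))"

definition hadamard_lower :: "('a::real_normed_vector \<Rightarrow> ereal) \<Rightarrow> 'a \<Rightarrow> 'a \<Rightarrow> ereal" where
  "hadamard_lower \<phi> x h =
     Liminf (at (0, h) within ({0<..} \<times> UNIV))
       (\<lambda>(t::real, h'). (\<phi> (x + t *\<^sub>R h') - \<phi> x) / ereal t)"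

definition bouligand_cone :: "'a::real_normed_vector set \<Rightarrow> 'a \<Rightarrow> 'a set" where
  "bouligand_cone C c = {v. \<exists>vs ts. vs \<longlonglongrightarrow> v \<and> ts \<longlonglongrightarrow> 0 \<and> (\<forall>n. ts n > (0::real))
        \<and> (\<forall>n. c + ts n *\<^sub>R vs n \<in> C)}"

text \<open>Shapiro first order contact property at a point, with respect to a norm N
  (the tangent cone only depends on the topology, which is that of any equivalent norm).\<close>
definition shapiro_at_wrt :: "('a::real_normed_vector \<Rightarrow> real) \<Rightarrow> 'a set \<Rightarrow> 'a \<Rightarrow> bool" where
  "shapiro_at_wrt N C a \<longleftrightarrow>
     (\<forall>\<epsilon>>0. \<exists>\<delta>>0. \<forall>x\<in>C. \<forall>u\<in>C. N (x - a) < \<delta> \<longrightarrow> N (u - a) < \<delta> \<longrightarrow>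
        (INF v\<in>bouligand_cone C u. N (x - u - v)) \<le> \<epsilon> * N (x - u))"

abbreviation shapiro_at :: "'a::real_normed_vector set \<Rightarrow> 'a \<Rightarrow> bool" where
  "shapiro_at C a \<equiv> shapiro_at_wrt norm C a"

definition shapiro_around :: "'a::real_normed_vector set \<Rightarrow> 'a \<Rightarrow> bool" where
  "shapiro_around C a \<longleftrightarrow> (\<exists>U. open U \<and> a \<in> U \<and> (\<forall>u\<in>C \<inter> U. shapiro_at C u))"

definition epigraph :: "('a \<Rightarrow> ereal) \<Rightarrow> ('a \<times> real) set" where
  "epigraph \<phi> = {(x, \<alpha>). \<phi> x \<le> ereal \<alpha>}"

definition epi_shapiro_at :: "('a::real_normed_vector \<Rightarrow> ereal) \<Rightarrow> 'a \<Rightarrow> bool" where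
  "epi_shapiro_at \<phi> x0 \<longleftrightarrow>
     shapiro_at_wrt (\<lambda>(x, \<alpha>). norm x + \<bar>\<alpha>\<bar>) (epigraph \<phi>) (x0, real_of_ereal (\<phi> x0))"

definition local_error_bound :: "('a::real_normed_vector \<Rightarrow> ereal) \<Rightarrow> 'a \<Rightarrow> bool" where
  "local_error_bound \<phi> x0 \<longleftrightarrow>
     (\<exists>\<tau>>0. \<exists>\<delta>>0. \<forall>x\<in>ball x0 \<delta>.
        ereal (infdist x (sublevel0 \<phi>)) \<le> ereal \<tau> * max (\<phi> x) 0)"

end

theory Submission
  imports Defs
begin

text \<open>
  (i) If \<open>\<phi> x = 0\<close> and \<open>\<phi>'\<^sub>H(x; h) \<le> 1\<close>, there are arbitrarily small \<open>t > 0\<close> and \<open>h'\<close>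
  near \<open>h\<close> with \<open>\<phi> (x + t h') \<le> 3t/2\<close>. The error bound puts a point \<open>u\<close> of the sublevel
  set \<open>S\<close> within \<open>O(t)\<close> of \<open>x + t h'\<close>, and the contact property at \<open>x\<close> turns \<open>u - x\<close> into
  a tangent direction \<open>v\<close> up to \<open>o(t)\<close>; hence \<open>h\<close> lies within a fixed distance of
  \<open>v / t \<in> T(S, x)\<close>.

  (ii) Suppose the error bound fails at some \<open>x\<close> with small \<open>\<phi> x = \<alpha> > 0\<close>. Ekeland's
  principle for \<open>dist x\<close> on \<open>S\<close> yields \<open>w \<in> bd S\<close> with \<open>D = dist x w\<close> comparable to
  \<open>d(x, S)\<close> and much larger than \<open>\<alpha>\<close>, such that no tangent direction \<open>v \<in> T(S, w)\<close> is
  closer than \<open>7D/9\<close> to \<open>x - w\<close>. The epigraphical contact property at \<open>(w, 0)\<close> gives a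
  tangent direction \<open>(k, g)\<close> to the epigraph close to \<open>(x - w, \<alpha>)\<close>, so
  \<open>\<phi>'\<^sub>H(w; k) \<le> g\<close> with \<open>g\<close> close to \<open>\<alpha>\<close>, and the excess bound yields \<open>v \<in> T(S, w)\<close>
  with \<open>\<parallel>k - v\<parallel>\<close> of order \<open>\<tau> \<alpha>\<close> plus small terms -- a contradiction.
\<close>

lemma closed_sublevel0:
  assumes "lsc_fun \<phi>"
  shows "closed (sublevel0 \<phi>)"
proof -
  have "\<exists>T. open T \<and> x \<in> T \<and> T \<subseteq> - sublevel0 \<phi>" if "x \<in> - sublevel0 \<phi>" for x
  proof -
    have "0 < \<phi> x" using that by (auto simp: sublevel0_def)
    also have "\<dots> \<le> Liminf (at x) \<phi>" using assms by (auto simp: lsc_fun_def)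
    finally have "eventually (\<lambda>y. 0 < \<phi> y) (at x)" by (rule less_LiminfD)
    then obtain T where "open T" "x \<in> T" "\<forall>y\<in>T. y \<noteq> x \<longrightarrow> 0 < \<phi> y"
      unfolding eventually_at_topological by auto
    moreover have "T \<subseteq> - sublevel0 \<phi>"
      using \<open>0 < \<phi> x\<close> \<open>\<forall>y\<in>T. y \<noteq> x \<longrightarrow> 0 < \<phi> y\<close>
      by (auto simp: sublevel0_def not_le)
    ultimately show ?thesis by blast
  qed
  then show ?thesis by (simp add: closed_def open_subopen[of "- sublevel0 \<phi>"])
qed

lemma ereal_diff_divide_le_iff:
  assumes "t > 0"
  shows "(b - ereal a) / ereal t \<le> ereal c \<longleftrightarrow> b \<le> ereal (a + c * t)"
  using assms by (cases b) (auto simp: field_simps)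

lemma cINF_less_nonnegE:
  fixes f :: "'b \<Rightarrow> real"
  assumes "(INF v\<in>T. f v) < c" "T \<noteq> {}" "\<And>v. 0 \<le> f v"
  obtains v where "v \<in> T" "f v < c"
proof -
  have "bdd_below (f ` T)" using assms(3) by (intro bdd_belowI[of _ 0]) auto
  with assms(1,2) have "\<exists>v\<in>T. f v < c" by (simp add: cINF_less_iff)
  with that show ?thesis by blast
qed

lemma infdist_lessE:
  assumes "infdist x A < d" "A \<noteq> {}"
  obtains a where "a \<in> A" "dist x a < d"
  using cINF_less_nonnegE[of "dist x" A d] assms by (auto simp: infdist_notempty)

lemma excess_le:
  assumes "D \<noteq> {}" "\<tau> \<ge> 0" "\<And>h. h \<in> C \<Longrightarrow> infdist h D \<le> \<tau>"
  shows "excess C D \<le> ereal \<tau>"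
  using assms by (auto simp: excess_def intro!: SUP_least)

lemma infdist_le_of_excess_le:
  assumes "excess C D \<le> ereal \<tau>" "D \<noteq> {}" "h \<in> C"
  shows "infdist h D \<le> \<tau>"
proof -
  have "ereal (infdist h D) \<le> excess C D"
    using assms(2,3) by (auto simp: excess_def intro: SUP_upper)
  then have "ereal (infdist h D) \<le> ereal \<tau>" using assms(1) by (rule order_trans)
  then show ?thesis by simp
qed

lemma bouligand_cone_zero:
  assumes "c \<in> C"
  shows "0 \<in> bouligand_cone C c"
  unfolding bouligand_cone_def
  using assms LIMSEQ_inverse_real_of_nat
  by (intro CollectI exI[of _ "\<lambda>n. 0"] exI[of _ "\<lambda>n. inverse (real (Suc n))"]) auto

lemma bouligand_cone_scaleR:
  assumes "v \<in> bouligand_cone C c" "a > 0"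
  shows "a *\<^sub>R v \<in> bouligand_cone C c"
proof -
  from assms obtain vs ts where vs: "vs \<longlonglongrightarrow> v" and ts: "ts \<longlonglongrightarrow> 0" "\<forall>n. ts n > (0::real)"
    and mem: "\<forall>n. c + ts n *\<^sub>R vs n \<in> C"
    unfolding bouligand_cone_def by blast
  have "(\<lambda>n. a *\<^sub>R vs n) \<longlonglongrightarrow> a *\<^sub>R v" using vs by (rule tendsto_scaleR[OF tendsto_const])
  moreover have "(\<lambda>n. ts n / a) \<longlonglongrightarrow> 0" using ts(1) by (rule tendsto_divide_zero)
  moreover have "\<forall>n. c + (ts n / a) *\<^sub>R (a *\<^sub>R vs n) \<in> C" using mem assms(2) by simp
  moreover have "\<forall>n. ts n / a > 0" using ts(2) assms(2) by simp
  ultimately show ?thesis unfolding bouligand_cone_def by blast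
qed

lemma bouligand_cone_interior:
  assumes "c \<in> interior C"
  shows "bouligand_cone C c = UNIV"
proof -
  obtain e where e: "e > 0" "ball c e \<subseteq> C" using assms mem_interior by blast
  have "v \<in> bouligand_cone C c" for v
  proof -
    have nv: "norm v + 1 > 0" by (simp add: add_nonneg_pos)
    define ts where "ts n = e / (norm v + 1) * inverse (real (Suc n))" for n
    have "ts \<longlonglongrightarrow> 0"
      unfolding ts_def by (intro tendsto_mult_right_zero LIMSEQ_inverse_real_of_nat)
    moreover have ts_pos: "ts n > 0" for n
      using e(1) nv by (simp add: ts_def)
    moreover have "c + ts n *\<^sub>R v \<in> C" for n
    proof -
      have "ts n \<le> e / (norm v + 1)"
        unfolding ts_def using e(1) by (intro mult_left_le) (auto simp: nv inverse_le_1_iff)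
      then have "ts n * norm v \<le> e / (norm v + 1) * norm v" by (rule mult_right_mono) simp
      also have "\<dots> < e / (norm v + 1) * (norm v + 1)"
        using e(1) nv by (intro mult_strict_left_mono) auto
      also have "\<dots> = e" using nv by simp
      finally show ?thesis using e ts_pos[of n] by (auto simp: dist_norm)
    qed
    ultimately show ?thesis unfolding bouligand_cone_def by blast
  qed
  then show ?thesis by blast
qed

lemma hadamard_lower_lessE:
  fixes \<phi> :: "'a::real_normed_vector \<Rightarrow> ereal"
  assumes "hadamard_lower \<phi> x h < ereal c" "\<phi> x = ereal a" "e > 0"
  obtains t h' where "0 < t" "t < e" "norm (h' - h) < e" "\<phi> (x + t *\<^sub>R h') \<le> ereal (a + c * t)"
proof -
  define G where "G = (\<lambda>(t::real, h'). (\<phi> (x + t *\<^sub>R h') - \<phi> x) / ereal t)"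
  define F where "F = at (0::real, h) within ({0<..} \<times> UNIV)"
  have "\<not> eventually (\<lambda>p. ereal c \<le> G p) F"
  proof
    assume "eventually (\<lambda>p. ereal c \<le> G p) F"
    then have "ereal c \<le> Liminf F G" by (rule Liminf_bounded)
    then show False using assms(1) unfolding hadamard_lower_def G_def F_def by simp
  qed
  then obtain t h' where th: "t > 0" "dist (t, h') (0, h) < e" "G (t, h') < ereal c"
    unfolding F_def eventually_at using assms(3) by (force simp: not_le)
  show ?thesis
  proof (rule that[OF th(1)])
    show "t < e" using dist_fst_le[of "(t, h')" "(0, h)"] th(2) by (simp add: dist_real_def)
    show "norm (h' - h) < e" using dist_snd_le[of "(t, h')" "(0, h)"] th(2) by (simp add: dist_norm)
    have "(\<phi> (x + t *\<^sub>R h') - ereal a) / ereal t \<le> ereal c"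
      using th(3) by (simp add: G_def assms(2))
    then show "\<phi> (x + t *\<^sub>R h') \<le> ereal (a + c * t)"
      by (simp only: ereal_diff_divide_le_iff[OF th(1)])
  qed
qed

lemma hadamard_lower_le_of_epigraph_tangent:
  fixes \<phi> :: "'a::real_normed_vector \<Rightarrow> ereal"
  assumes \<phi>w: "\<phi> w = ereal a" and kg: "(k, g) \<in> bouligand_cone (epigraph \<phi>) (w, a)"
  shows "hadamard_lower \<phi> w k \<le> ereal g"
proof (rule ccontr)
  assume "\<not> ?thesis"
  then have "ereal g < hadamard_lower \<phi> w k" by (simp add: not_le)
  then obtain c where "ereal g < ereal c" and c: "ereal c < hadamard_lower \<phi> w k"
    using ereal_dense2 by blast
  then have "g < c" by simp
  define G where "G = (\<lambda>(t::real, h'). (\<phi> (w + t *\<^sub>R h') - \<phi> w) / ereal t)"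
  define F where "F = at (0::real, k) within ({0<..} \<times> UNIV)"
  have ev: "eventually (\<lambda>p. ereal c < G p) F"
    using c unfolding hadamard_lower_def G_def F_def by (rule less_LiminfD)
  from kg obtain vs ts where vs: "vs \<longlonglongrightarrow> (k, g)" and ts: "ts \<longlonglongrightarrow> 0" "\<forall>n. ts n > (0::real)"
    and mem: "\<forall>n. (w, a) + ts n *\<^sub>R vs n \<in> epigraph \<phi>"
    unfolding bouligand_cone_def by blast
  have Gle: "G (ts n, fst (vs n)) \<le> ereal (snd (vs n))" for n
  proof -
    have "\<phi> (w + ts n *\<^sub>R fst (vs n)) \<le> ereal (a + snd (vs n) * ts n)"
      using mem[rule_format, of n] by (simp add: epigraph_def case_prod_beta algebra_simps)
    then show ?thesis using ereal_diff_divide_le_iff[OF ts(2)[rule_format]] by (simp add: G_def \<phi>w)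
  qed
  have "filterlim (\<lambda>n. (ts n, fst (vs n))) F sequentially"
    unfolding F_def filterlim_at using ts tendsto_fst[OF vs]
    by (auto intro!: always_eventually tendsto_Pair) (metis less_irrefl)
  with ev have "eventually (\<lambda>n. ereal c < G (ts n, fst (vs n))) sequentially"
    by (rule eventually_compose_filterlim)
  moreover have "eventually (\<lambda>n. snd (vs n) < c) sequentially"
    using tendsto_snd[OF vs] \<open>g < c\<close> by (simp add: order_tendstoD(2))
  ultimately have "eventually (\<lambda>n. False) sequentially"
  proof eventually_elim
    case (elim n)
    then have "ereal c < ereal (snd (vs n))" using Gle[of n] by (meson less_le_trans)
    with elim show False by simp
  qed
  then show False by simp
qed

definition ekeland_set :: "'a::metric_space set \<Rightarrow> ('a \<Rightarrow> real) \<Rightarrow> real \<Rightarrow> 'a \<Rightarrow> 'a set" where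
  "ekeland_set S f \<eta> z = {y \<in> S. f y + \<eta> * dist y z \<le> f z}"

lemma ekeland_set_self: "z \<in> S \<Longrightarrow> z \<in> ekeland_set S f \<eta> z"
  by (simp add: ekeland_set_def)

lemma closed_ekeland_set:
  assumes "closed S" "continuous_on S f"
  shows "closed (ekeland_set S f \<eta> z)"
  unfolding ekeland_set_def
  using assms by (intro continuous_on_closed_Collect_le continuous_intros) auto

lemma ekeland_set_trans:
  assumes "\<eta> \<ge> 0" "y \<in> ekeland_set S f \<eta> z"
  shows "ekeland_set S f \<eta> y \<subseteq> ekeland_set S f \<eta> z"
proof
  fix u assume u: "u \<in> ekeland_set S f \<eta> y"
  have "\<eta> * dist u z \<le> \<eta> * dist u y + \<eta> * dist y z"
    using assms(1) dist_triangle[of u z y] by (simp add: mult_left_mono flip: distrib_left)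
  with u assms(2) show "u \<in> ekeland_set S f \<eta> z" by (auto simp: ekeland_set_def)
qed

lemma ekeland_set_dist_le:
  assumes "\<eta> \<ge> 0" "\<And>y. y \<in> S \<Longrightarrow> b \<le> f y"
    and "y \<in> ekeland_set S f \<eta> z" "u \<in> ekeland_set S f \<eta> y"
  shows "\<eta> * dist u y \<le> f y - (INF v\<in>ekeland_set S f \<eta> z. f v)"
proof -
  have "bdd_below (f ` ekeland_set S f \<eta> z)"
    using assms(2) by (intro bdd_belowI[of _ b]) (auto simp: ekeland_set_def)
  moreover have "u \<in> ekeland_set S f \<eta> z" using ekeland_set_trans assms(1,3,4) by blast
  ultimately have "(INF v\<in>ekeland_set S f \<eta> z. f v) \<le> f u" by (rule cINF_lower)
  with assms(4) show ?thesis by (simp add: ekeland_set_def)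
qed

text \<open>Each \<open>ws (Suc n)\<close> minimises \<open>f\<close> on \<open>ekeland_set S f \<eta> (ws n)\<close> up to \<open>1 / (n + 1)\<close>.\<close>
lemma ekeland_sequence:
  fixes f :: "'a::metric_space \<Rightarrow> real"
  assumes w0: "w0 \<in> S" and bdd: "\<And>y. y \<in> S \<Longrightarrow> b \<le> f y" and \<eta>: "\<eta> > 0"
  obtains ws where "ws 0 = w0" "\<And>n. ws (Suc n) \<in> ekeland_set S f \<eta> (ws n)"
    "\<And>u v n. u \<in> ekeland_set S f \<eta> (ws (Suc n)) \<Longrightarrow> v \<in> ekeland_set S f \<eta> (ws (Suc n)) \<Longrightarrow>
       \<eta> * dist u v < 2 * inverse (real (Suc n))"
proof -
  define A where "A = ekeland_set S f \<eta>"
  have "\<exists>y. y \<in> A z \<and> f y < (INF v\<in>A z. f v) + inverse (real (Suc n))" if "z \<in> S" for z n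
  proof -
    have "bdd_below (f ` A z)" using bdd by (intro bdd_belowI[of _ b]) (auto simp: A_def ekeland_set_def)
    moreover have "A z \<noteq> {}" using ekeland_set_self[OF that] by (auto simp: A_def)
    ultimately show ?thesis
      using cINF_less_iff[of "A z" f "(INF v\<in>A z. f v) + inverse (real (Suc n))"] by auto
  qed
  then have "\<exists>ws. \<forall>n. (ws n \<in> S \<and> (n = 0 \<longrightarrow> ws n = w0)) \<and> ws (Suc n) \<in> A (ws n)
      \<and> f (ws (Suc n)) < (INF v\<in>A (ws n). f v) + inverse (real (Suc n))"
    using w0 by (intro dependent_nat_choice) (auto simp: A_def ekeland_set_def)
  then obtain ws where ws0: "ws 0 = w0" and ws_in: "\<And>n. ws (Suc n) \<in> A (ws n)"
    and ws_min: "\<And>n. f (ws (Suc n)) < (INF v\<in>A (ws n). f v) + inverse (real (Suc n))"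
    by blast
  have "\<eta> * dist u v < 2 * inverse (real (Suc n))"
    if "u \<in> A (ws (Suc n))" "v \<in> A (ws (Suc n))" for u v n
  proof -
    have "\<eta> * dist u (ws (Suc n)) < inverse (real (Suc n))" if "u \<in> A (ws (Suc n))" for u
      using ekeland_set_dist_le[OF less_imp_le[OF \<eta>] bdd, where y = "ws (Suc n)" and z = "ws n"]
        ws_in ws_min[of n] that
      by (fastforce simp: A_def)
    from this[OF that(1)] this[OF that(2)]
    have "\<eta> * dist u (ws (Suc n)) + \<eta> * dist v (ws (Suc n)) < 2 * inverse (real (Suc n))"
      by linarith
    moreover have "\<eta> * dist u v \<le> \<eta> * dist u (ws (Suc n)) + \<eta> * dist v (ws (Suc n))"
      using \<eta> dist_triangle3[of u v "ws (Suc n)"] by (simp add: dist_commute flip: distrib_left)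
    ultimately show ?thesis by linarith
  qed
  with ws0 ws_in that show ?thesis unfolding A_def by blast
qed

lemma ekeland_variational_principle:
  fixes f :: "'a::complete_space \<Rightarrow> real"
  assumes S: "closed S" and w0: "w0 \<in> S" and f: "continuous_on S f"
    and bdd: "\<And>y. y \<in> S \<Longrightarrow> b \<le> f y" and \<eta>: "\<eta> > 0"
  obtains w where "w \<in> S" "f w + \<eta> * dist w w0 \<le> f w0"
    "\<And>y. y \<in> S \<Longrightarrow> f w \<le> f y + \<eta> * dist y w"
proof -
  define A where "A = ekeland_set S f \<eta>"
  obtain ws where ws0: "ws 0 = w0" and ws_in: "\<And>n. ws (Suc n) \<in> A (ws n)"
    and diam: "\<And>u v n. u \<in> A (ws (Suc n)) \<Longrightarrow> v \<in> A (ws (Suc n)) \<Longrightarrow>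
      \<eta> * dist u v < 2 * inverse (real (Suc n))"
    using ekeland_sequence[where f = f, OF w0 bdd \<eta>] unfolding A_def by blast
  have nested: "A (ws n) \<subseteq> A (ws m)" if "m \<le> n" for m n
  proof -
    have "decseq (\<lambda>n. A (ws n))"
      using ekeland_set_trans[OF less_imp_le[OF \<eta>] ws_in[unfolded A_def]]
      by (intro decseq_SucI) (simp add: A_def)
    with that show ?thesis by (simp add: decseq_def)
  qed
  have shrink: "\<exists>n. 2 * inverse (real (Suc n)) < \<eta> * e" if "e > 0" for e
    using reals_Archimedean[of "\<eta> * e / 2"] \<eta> that by (auto simp: field_simps)
  obtain w where w: "\<And>n. w \<in> A (ws n)"
  proof (rule decreasing_closed_nest[of "\<lambda>n. A (ws n)"])
    show "closed (A (ws n))" for n unfolding A_def using S f by (rule closed_ekeland_set)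
    show "A (ws n) \<noteq> {}" for n using ws_in[of n] nested[of n "Suc n"] by auto
    show "A (ws n) \<subseteq> A (ws m)" if "m \<le> n" for m n using nested that .
    show "\<exists>n. \<forall>u\<in>A (ws n). \<forall>v\<in>A (ws n). dist u v < e" if e: "e > 0" for e
    proof -
      obtain n where "2 * inverse (real (Suc n)) < \<eta> * e" using shrink e by blast
      then have "\<eta> * dist u v < \<eta> * e" if "u \<in> A (ws (Suc n))" "v \<in> A (ws (Suc n))" for u v
        using diam[OF that] by linarith
      with \<eta> show ?thesis by (intro exI[of _ "Suc n"]) (auto simp: mult_less_cancel_left_pos)
    qed
  qed blast
  show ?thesis
  proof (rule that)
    show "w \<in> S" and "f w + \<eta> * dist w w0 \<le> f w0"
      using w[of 0] by (auto simp: A_def ekeland_set_def ws0)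
    show "f w \<le> f y + \<eta> * dist y w" if y: "y \<in> S" for y
    proof (rule ccontr)
      assume "\<not> ?thesis"
      then have "y \<in> A w" using y by (auto simp: A_def ekeland_set_def)
      then have "y \<in> A (ws n)" for n
        using ekeland_set_trans[OF less_imp_le[OF \<eta>] w[unfolded A_def]] by (auto simp: A_def)
      then have "\<eta> * dist y w < 2 * inverse (real (Suc n))" for n using diam w by blast
      then have "y = w" using shrink[of "dist y w"] by (cases "y = w") (auto dest: less_asym)
      with \<open>\<not> ?thesis\<close> \<eta> show False by simp
    qed
  qed
qed

lemma ekeland_point_tangent_bound:
  fixes x w v :: "'a::real_normed_vector"
  assumes ek: "\<And>y. y \<in> S \<Longrightarrow> dist x w \<le> dist x y + \<eta> * dist y w"
    and \<eta>: "\<eta> \<ge> 0" and v: "v \<in> bouligand_cone S w"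
  shows "(1 - \<eta>) * dist x w \<le> (1 + \<eta>) * norm (x - w - v)"
proof -
  from v obtain vs ts where vs: "vs \<longlonglongrightarrow> v" and ts: "ts \<longlonglongrightarrow> 0" "\<forall>n. ts n > (0::real)"
    and mem: "\<forall>n. w + ts n *\<^sub>R vs n \<in> S"
    unfolding bouligand_cone_def by blast
  define D where "D = dist x w"
  define a where "a = norm (x - w - v)"
  define \<delta> where "\<delta> n = norm (vs n - v)" for n
  have "(1 - \<eta>) * D \<le> (1 + \<eta>) * (a + \<delta> n)" if "ts n < 1" for n
  proof -
    define t where "t = ts n"
    have t: "0 < t" "t < 1" using ts(2) that by (auto simp: t_def)
    have "x - (w + t *\<^sub>R vs n) = (1 - t) *\<^sub>R (x - w) + t *\<^sub>R (x - w - v) + t *\<^sub>R (v - vs n)"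
      by (simp add: algebra_simps)
    then have "dist x (w + t *\<^sub>R vs n)
        \<le> norm ((1 - t) *\<^sub>R (x - w)) + norm (t *\<^sub>R (x - w - v)) + norm (t *\<^sub>R (v - vs n))"
      unfolding dist_norm by (metis norm_triangle_le add_mono norm_triangle_ineq order_refl)
    also have "\<dots> = (1 - t) * D + t * a + t * \<delta> n"
      using t by (simp add: D_def a_def \<delta>_def dist_norm norm_minus_commute[of v])
    finally have "dist x (w + t *\<^sub>R vs n) \<le> (1 - t) * D + t * a + t * \<delta> n" .
    moreover have "dist (w + t *\<^sub>R vs n) w \<le> t * (D + a + \<delta> n)"
    proof -
      have "norm (vs n) \<le> norm (x - w) + norm (x - w - v) + norm (vs n - v)"
        using norm_triangle_ineq4[of "x - w" "x - w - v"] norm_triangle_ineq2[of "vs n" v] by simp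
      then show ?thesis using t by (simp add: dist_norm D_def a_def \<delta>_def mult_left_mono)
    qed
    ultimately have "D \<le> (1 - t) * D + t * a + t * \<delta> n + \<eta> * (t * (D + a + \<delta> n))"
      using ek[of "w + t *\<^sub>R vs n"] mem \<eta> unfolding t_def D_def
      by (smt (verit, best) mult_left_mono)
    then have "t * D \<le> t * (a + \<delta> n + \<eta> * (D + a + \<delta> n))" by (simp add: algebra_simps)
    then have "D \<le> a + \<delta> n + \<eta> * (D + a + \<delta> n)" using t(1) by simp
    then show ?thesis by (simp add: algebra_simps)
  qed
  moreover have "eventually (\<lambda>n. ts n < 1) sequentially" using ts(1) by (simp add: order_tendstoD(2))
  ultimately have "eventually (\<lambda>n. (1 - \<eta>) * D \<le> (1 + \<eta>) * (a + \<delta> n)) sequentially"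
    by (auto elim: eventually_mono)
  moreover have "(\<lambda>n. (1 + \<eta>) * (a + \<delta> n)) \<longlonglongrightarrow> (1 + \<eta>) * (a + 0)"
    unfolding \<delta>_def using vs by (intro tendsto_intros tendsto_norm_zero LIM_zero)
  ultimately show ?thesis unfolding D_def a_def by (simp add: tendsto_lowerbound)
qed

lemma ekeland_point_in_frontier:
  fixes x w :: "'a::real_normed_vector"
  assumes "closed S" "w \<in> S" "x \<notin> S"
    and ek: "\<And>y. y \<in> S \<Longrightarrow> dist x w \<le> dist x y + \<eta> * dist y w"
    and "0 \<le> \<eta>" "\<eta> < 1"
  shows "w \<in> frontier S"
proof -
  have "w \<notin> interior S"
  proof
    assume "w \<in> interior S"
    then have "x - w \<in> bouligand_cone S w" by (simp add: bouligand_cone_interior)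
    with ek assms(5) have "(1 - \<eta>) * dist x w \<le> 0"
      by (metis ekeland_point_tangent_bound diff_self norm_zero mult_zero_right)
    with assms(2,3,6) show False by (simp add: mult_le_0_iff)
  qed
  with assms(1,2) show ?thesis by (simp add: frontier_def)
qed

lemma ekeland_frontier_point:
  fixes x :: "'a::banach"
  assumes closed: "closed S" and "a \<in> S" and "x \<notin> S" and \<eta>: "0 < \<eta>" "\<eta> < 1"
  obtains w where "w \<in> frontier S" "infdist x S \<le> dist x w" "dist x w \<le> 2 * infdist x S"
    "\<And>y. y \<in> S \<Longrightarrow> dist x w \<le> dist x y + \<eta> * dist y w"
proof -
  have "S \<noteq> {}" using assms(2) by blast
  then have "0 < infdist x S" using infdist_pos_not_in_closed closed assms(3) by blast
  then obtain w0 where w0: "w0 \<in> S" "dist x w0 < 2 * infdist x S"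
    using infdist_lessE[of x S "2 * infdist x S"] \<open>S \<noteq> {}\<close> by auto
  obtain w where w: "w \<in> S" "dist x w + \<eta> * dist w w0 \<le> dist x w0"
    and ek: "\<And>y. y \<in> S \<Longrightarrow> dist x w \<le> dist x y + \<eta> * dist y w"
  proof (rule ekeland_variational_principle[OF closed w0(1), of "dist x" 0 \<eta>])
    show "continuous_on S (dist x)" by (intro continuous_intros)
  qed (use \<eta> in auto)
  show ?thesis
  proof (rule that[OF _ _ _ ek])
    show "w \<in> frontier S" using ekeland_point_in_frontier[OF closed w(1) assms(3) ek] \<eta> by simp
    show "infdist x S \<le> dist x w" using infdist_le[OF w(1)] .
    show "dist x w \<le> 2 * infdist x S"
      using w(2) w0(2) mult_nonneg_nonneg[OF less_imp_le[OF \<eta>(1)] zero_le_dist[of w w0]] by linarith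
  qed
qed

lemma shapiro_atE:
  fixes C :: "'a::real_normed_vector set"
  assumes "shapiro_at C a" "\<epsilon> > 0"
  obtains \<delta> where "\<delta> > 0"
    "\<And>x u. x \<in> C \<Longrightarrow> u \<in> C \<Longrightarrow> norm (x - a) < \<delta> \<Longrightarrow> norm (u - a) < \<delta> \<Longrightarrow>
       infdist (x - u) (bouligand_cone C u) \<le> \<epsilon> * norm (x - u)"
proof -
  have "infdist (x - u) (bouligand_cone C u) = (INF v\<in>bouligand_cone C u. norm (x - u - v))"
    if "u \<in> C" for x u
  proof -
    have "bouligand_cone C u \<noteq> {}" using bouligand_cone_zero[OF that] by blast
    then show ?thesis by (simp add: infdist_notempty dist_norm)
  qed
  with assms that show ?thesis unfolding shapiro_at_wrt_def by metis
qed

lemma infdist_tangent_cone_le_of_error_bound: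
  fixes \<phi> :: "'a::real_normed_vector \<Rightarrow> ereal"
  defines "S \<equiv> sublevel0 \<phi>"
  assumes shapiro: "shapiro_at S x" and x: "x \<in> S" "\<phi> x = 0" and \<tau>: "\<tau> > 0" and m: "m > 0"
    and error_bound: "\<And>y. y \<in> ball x m \<Longrightarrow> ereal (infdist y S) \<le> ereal \<tau> * max (\<phi> y) 0"
    and h: "hadamard_lower \<phi> x h \<le> 1"
  shows "infdist h (bouligand_cone S x) \<le> 2 * \<tau> + 1"
proof -
  define K where "K = norm h + 2 * \<tau> + 3"
  have K: "K > 0" "norm h + 1 \<le> K" unfolding K_def using \<tau> norm_ge_zero[of h] by linarith+
  obtain \<delta> where \<delta>: "\<delta> > 0" and sh: "\<And>y u. y \<in> S \<Longrightarrow> u \<in> S \<Longrightarrow> norm (y - x) < \<delta> \<Longrightarrow>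
      norm (u - x) < \<delta> \<Longrightarrow> infdist (y - u) (bouligand_cone S u) \<le> 1 / (8 * K) * norm (y - u)"
    using shapiro_atE[OF shapiro, of "1 / (8 * K)"] K(1) by auto
  define e where "e = min (1/8) (min (m / K) (\<delta> / K))"
  have e: "e > 0" using m \<delta> K by (simp add: e_def)
  have "hadamard_lower \<phi> x h < ereal (3/2)" using h by (simp add: order_le_less_trans)
  then obtain t h' where t: "0 < t" "t < e" and h': "norm (h' - h) < e"
    and \<phi>y: "\<phi> (x + t *\<^sub>R h') \<le> ereal (0 + 3/2 * t)"
    using hadamard_lower_lessE[OF _ _ e] x(2) zero_ereal_def by metis
  define y where "y = x + t *\<^sub>R h'"
  have tK: "t * K < m" "t * K < \<delta>" using t K(1) by (auto simp: e_def less_divide_eq)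
  have "norm h' \<le> norm h + 1" using h' norm_triangle_ineq2[of h' h] by (simp add: e_def)
  then have yx: "norm (y - x) \<le> t * (norm h + 1)" using t by (simp add: y_def mult_left_mono)
  also have "\<dots> \<le> t * K" using t K by (simp add: mult_left_mono)
  finally have "y \<in> ball x m" using tK by (simp add: dist_norm norm_minus_commute)
  have "max (\<phi> y) 0 \<le> ereal (3/2 * t)" using \<phi>y t by (simp add: y_def)
  then have "ereal \<tau> * max (\<phi> y) 0 \<le> ereal \<tau> * ereal (3/2 * t)"
    by (rule ereal_mult_left_mono) (use \<tau> in simp)
  with error_bound[OF \<open>y \<in> ball x m\<close>] have "ereal (infdist y S) \<le> ereal \<tau> * ereal (3/2 * t)"
    by (rule order_trans)
  then have "infdist y S < (3/2 * \<tau> + 1/2) * t" using t by (simp add: algebra_simps)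
  then obtain u where u: "u \<in> S" "dist y u < (3/2 * \<tau> + 1/2) * t"
    using infdist_lessE x(1) by blast
  have "norm (u - x) \<le> norm (y - x) + dist y u"
    using norm_triangle_ineq[of "y - x" "u - y"] by (simp add: dist_norm norm_minus_commute)
  also have "\<dots> \<le> t * (norm h + 1) + (3/2 * \<tau> + 1/2) * t" using yx u(2) by linarith
  also have "\<dots> = t * (norm h + 3/2 + 3/2 * \<tau>)" by (simp add: algebra_simps)
  also have "\<dots> \<le> t * K" using t(1) \<tau> by (intro mult_left_mono) (auto simp: K_def)
  finally have ux: "norm (u - x) \<le> t * K" .
  then have "infdist (u - x) (bouligand_cone S x) \<le> 1 / (8 * K) * norm (u - x)"
    using sh[OF u(1) x(1)] \<delta> tK by simp
  also have "\<dots> \<le> 1 / (8 * K) * (t * K)" using ux K(1) by (intro mult_left_mono) auto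
  also have "\<dots> < t / 4" using t K(1) by simp
  finally obtain v where v: "v \<in> bouligand_cone S x" "dist (u - x) v < t / 4"
    using infdist_lessE bouligand_cone_zero[OF x(1)] by blast
  have "h - (1 / t) *\<^sub>R v = (h - h') + (1 / t) *\<^sub>R (y - u) + (1 / t) *\<^sub>R (u - x - v)"
    using t by (simp add: y_def algebra_simps)
  then have "norm (h - (1 / t) *\<^sub>R v)
      \<le> norm (h - h') + norm ((1 / t) *\<^sub>R (y - u)) + norm ((1 / t) *\<^sub>R (u - x - v))"
    by (metis norm_triangle_le add_mono norm_triangle_ineq order_refl)
  also have "\<dots> = norm (h - h') + norm (y - u) / t + norm (u - x - v) / t" using t by simp
  also have "\<dots> \<le> 1/8 + (3/2 * \<tau> + 1/2) + 1/4"
    using h' u(2) v(2) t by (intro add_mono) (auto simp: e_def dist_norm norm_minus_commute[of h] divide_le_eq)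
  also have "\<dots> \<le> 2 * \<tau> + 1" using \<tau> by simp
  finally show ?thesis
    using infdist_le2[OF bouligand_cone_scaleR[OF v(1), of "1 / t"]] t by (simp add: dist_norm)
qed

lemma tangent_excess_bound_of_error_bound:
  fixes \<phi> :: "'a::real_normed_vector \<Rightarrow> ereal"
  assumes shapiro: "shapiro_around (sublevel0 \<phi>) xbar" and error_bound: "local_error_bound \<phi> xbar"
  shows "\<exists>\<tau>>0. \<exists>r>0. \<forall>x\<in>sublevel0 \<phi> \<inter> ball xbar r. \<phi> x = 0 \<longrightarrow>
           excess {h. hadamard_lower \<phi> x h \<le> 1} (bouligand_cone (sublevel0 \<phi>) x) \<le> ereal \<tau>"
proof -
  obtain U where U: "open U" "xbar \<in> U" "\<And>u. u \<in> sublevel0 \<phi> \<inter> U \<Longrightarrow> shapiro_at (sublevel0 \<phi>) u"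
    using shapiro unfolding shapiro_around_def by blast
  obtain \<rho> where \<rho>: "\<rho> > 0" "ball xbar \<rho> \<subseteq> U" using U open_contains_ball by blast
  obtain \<tau> \<delta> where \<tau>: "\<tau> > 0" and \<delta>: "\<delta> > 0"
    and bound: "\<And>y. y \<in> ball xbar \<delta> \<Longrightarrow> ereal (infdist y (sublevel0 \<phi>)) \<le> ereal \<tau> * max (\<phi> y) 0"
    using error_bound unfolding local_error_bound_def by blast
  have "excess {h. hadamard_lower \<phi> x h \<le> 1} (bouligand_cone (sublevel0 \<phi>) x) \<le> ereal (2 * \<tau> + 1)"
    if x: "x \<in> sublevel0 \<phi>" "x \<in> ball xbar (min \<rho> \<delta>)" "\<phi> x = 0" for x
  proof (rule excess_le)
    show "bouligand_cone (sublevel0 \<phi>) x \<noteq> {}" using bouligand_cone_zero[OF x(1)] by blast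
    show "2 * \<tau> + 1 \<ge> 0" using \<tau> by simp
    have "ball x (\<delta> - dist xbar x) \<subseteq> ball xbar \<delta>"
    proof
      fix y assume "y \<in> ball x (\<delta> - dist xbar x)"
      then show "y \<in> ball xbar \<delta>" using dist_triangle[of xbar y x] by simp
    qed
    moreover have "\<delta> - dist xbar x > 0" using x(2) by simp
    moreover have "shapiro_at (sublevel0 \<phi>) x" using U(3) \<rho>(2) x(1,2) by auto
    ultimately show "infdist h (bouligand_cone (sublevel0 \<phi>) x) \<le> 2 * \<tau> + 1"
      if "h \<in> {h. hadamard_lower \<phi> x h \<le> 1}" for h
      using infdist_tangent_cone_le_of_error_bound[OF _ x(1,3) \<tau>] bound that by blast
  qed
  moreover have "2 * \<tau> + 1 > 0" "min \<rho> \<delta> > 0" using \<tau> \<rho> \<delta> by auto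
  ultimately show ?thesis by blast
qed

lemma local_error_bound_of_interior:
  assumes "xbar \<in> interior (sublevel0 \<phi>)"
  shows "local_error_bound \<phi> xbar"
proof -
  obtain e where e: "e > 0" "ball xbar e \<subseteq> sublevel0 \<phi>" using assms mem_interior by blast
  then have "ereal (infdist x (sublevel0 \<phi>)) \<le> ereal 1 * max (\<phi> x) 0" if "x \<in> ball xbar e" for x
    using that by (auto simp: zero_ereal_def)
  with e(1) show ?thesis unfolding local_error_bound_def by (intro exI[of _ 1]) auto
qed

lemma local_error_bound_of_small_values:
  fixes \<phi> :: "'a::real_normed_vector \<Rightarrow> ereal"
  assumes xbar: "xbar \<in> sublevel0 \<phi>" and "\<rho> > 0" "\<beta> > 0" "M > 0"
    and small: "\<And>x \<alpha>. x \<in> ball xbar \<rho> \<Longrightarrow> \<phi> x = ereal \<alpha> \<Longrightarrow> 0 < \<alpha> \<Longrightarrow> \<alpha> < \<beta> \<Longrightarrow>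
        infdist x (sublevel0 \<phi>) \<le> M * \<alpha>"
  shows "local_error_bound \<phi> xbar"
proof -
  define \<tau> where "\<tau> = M + \<rho> / \<beta>"
  have "\<rho> / \<beta> > 0" using assms(2,3) by simp
  then have \<tau>: "\<tau> > 0" "M \<le> \<tau>" "\<rho> / \<beta> \<le> \<tau>" using assms(4) by (auto simp: \<tau>_def)
  have "ereal (infdist x (sublevel0 \<phi>)) \<le> ereal \<tau> * max (\<phi> x) 0" if x: "x \<in> ball xbar \<rho>" for x
  proof (cases "\<phi> x")
    case (real \<alpha>)
    show ?thesis
    proof (cases "\<alpha> \<le> 0")
      case True
      then have "x \<in> sublevel0 \<phi>" using real by (simp add: sublevel0_def)
      then show ?thesis using True real by (simp add: max_def)
    next
      case False
      have "infdist x (sublevel0 \<phi>) \<le> \<tau> * \<alpha>"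
      proof (cases "\<alpha> < \<beta>")
        case True
        then show ?thesis
          using small[OF x real] False \<tau>(2) by (smt (verit) mult_right_mono)
      next
        case True: False
        have "infdist x (sublevel0 \<phi>) \<le> dist x xbar" by (rule infdist_le[OF xbar])
        also have "\<dots> < \<rho> / \<beta> * \<beta>" using x assms(3) by (simp add: dist_commute)
        also have "\<dots> \<le> \<tau> * \<alpha>" using True \<tau>(1,3) assms(3) \<open>\<not> \<alpha> \<le> 0\<close>
          by (intro mult_mono) auto
        finally show ?thesis by simp
      qed
      then show ?thesis using real False by (simp add: max_def)
    qed
  next
    case PInf
    then show ?thesis using \<tau>(1) by simp
  next
    case MInf
    then have "x \<in> sublevel0 \<phi>" by (simp add: sublevel0_def)
    with MInf show ?thesis by (simp add: max_def zero_ereal_def)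
  qed
  with \<tau>(1) assms(2) show ?thesis unfolding local_error_bound_def by blast
qed

lemma sublevel_tangent_near_epigraph_tangent:
  fixes \<phi> :: "'a::real_normed_vector \<Rightarrow> ereal"
  assumes \<phi>w: "\<phi> w = 0" and kg: "(k, g) \<in> bouligand_cone (epigraph \<phi>) (w, 0)"
    and "g \<le> \<gamma>" "\<gamma> > 0" "\<tau> > 0"
    and excess: "excess {h. hadamard_lower \<phi> w h \<le> 1} (bouligand_cone (sublevel0 \<phi>) w) \<le> ereal \<tau>"
  obtains v where "v \<in> bouligand_cone (sublevel0 \<phi>) w" "norm (k - v) < 2 * \<tau> * \<gamma>"
proof -
  define T where "T = bouligand_cone (sublevel0 \<phi>) w"
  have "((1 / \<gamma>) *\<^sub>R k, (1 / \<gamma>) * g) \<in> bouligand_cone (epigraph \<phi>) (w, 0)"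
    using bouligand_cone_scaleR[OF kg, of "1 / \<gamma>"] \<open>\<gamma> > 0\<close> by simp
  then have "hadamard_lower \<phi> w ((1 / \<gamma>) *\<^sub>R k) \<le> ereal ((1 / \<gamma>) * g)"
    using \<phi>w by (intro hadamard_lower_le_of_epigraph_tangent) (simp_all add: zero_ereal_def)
  also have "\<dots> \<le> 1" using assms(3,4) by simp
  finally have "(1 / \<gamma>) *\<^sub>R k \<in> {h. hadamard_lower \<phi> w h \<le> 1}" by simp
  moreover have T0: "0 \<in> T" unfolding T_def using \<phi>w by (intro bouligand_cone_zero) (simp add: sublevel0_def)
  ultimately have "infdist ((1 / \<gamma>) *\<^sub>R k) T \<le> \<tau>"
    using infdist_le_of_excess_le[OF excess] unfolding T_def by blast
  then have "infdist ((1 / \<gamma>) *\<^sub>R k) T < 2 * \<tau>" using \<open>\<tau> > 0\<close> by linarith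
  then obtain v' where v': "v' \<in> T" "dist ((1 / \<gamma>) *\<^sub>R k) v' < 2 * \<tau>"
    using infdist_lessE T0 by blast
  have "k - \<gamma> *\<^sub>R v' = \<gamma> *\<^sub>R ((1 / \<gamma>) *\<^sub>R k - v')" using \<open>\<gamma> > 0\<close> by (simp add: algebra_simps)
  then have "norm (k - \<gamma> *\<^sub>R v') = \<gamma> * dist ((1 / \<gamma>) *\<^sub>R k) v'"
    using \<open>\<gamma> > 0\<close> by (simp add: dist_norm)
  also have "\<dots> < 2 * \<tau> * \<gamma>" using v'(2) \<open>\<gamma> > 0\<close> by simp
  finally show ?thesis
    using that bouligand_cone_scaleR[OF v'(1)[unfolded T_def] \<open>\<gamma> > 0\<close>] by blast
qed

lemma infdist_sublevel0_le_of_epi_shapiro: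
  fixes \<phi> :: "'a::banach \<Rightarrow> ereal"
  defines "S \<equiv> sublevel0 \<phi>" and "N \<equiv> \<lambda>(y::'a, a::real). norm y + \<bar>a\<bar>"
  assumes closed: "closed S" and frontier: "frontier S \<subseteq> \<phi> -` {0}"
    and xbar: "xbar \<in> S" and \<tau>: "\<tau> > 0"
    and excess: "\<And>w. w \<in> frontier S \<Longrightarrow> dist xbar w < \<delta> \<Longrightarrow>
      excess {h. hadamard_lower \<phi> w h \<le> 1} (bouligand_cone S w) \<le> ereal \<tau>"
    and epi: "\<And>p q. p \<in> epigraph \<phi> \<Longrightarrow> q \<in> epigraph \<phi> \<Longrightarrow>
      N (p - (xbar, 0)) < \<delta> \<Longrightarrow> N (q - (xbar, 0)) < \<delta> \<Longrightarrow>
      (INF v\<in>bouligand_cone (epigraph \<phi>) q. N (p - q - v)) \<le> 1 / (32 * (1 + \<tau>)) * N (p - q)"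
    and x: "dist xbar x < \<delta> / 4" "\<phi> x = ereal \<alpha>" "0 < \<alpha>" "\<alpha> < \<delta> / 2"
  shows "infdist x S \<le> (16 * \<tau> + 1) * \<alpha>"
proof (rule ccontr)
  \<comment> \<open>\<open>\<epsilon>\<close> is small enough that all error terms below stay under \<open>7D/9\<close>.\<close>
  define \<epsilon> where "\<epsilon> = 1 / (32 * (1 + \<tau>))"
  have \<epsilon>: "\<epsilon> > 0" "\<epsilon> * (3 + 6 * \<tau>) \<le> 6 / 32" using \<tau> by (auto simp: \<epsilon>_def field_simps)
  assume "\<not> ?thesis"
  then have far: "(16 * \<tau> + 1) * \<alpha> < infdist x S" by simp
  moreover have "0 < (16 * \<tau> + 1) * \<alpha>" using \<tau> x(3) by simp
  ultimately have "0 < infdist x S" by linarith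
  then have "x \<notin> S" by auto
  obtain w where wfr: "w \<in> frontier S" and dist_w: "infdist x S \<le> dist x w" "dist x w \<le> 2 * infdist x S"
    and ek: "\<And>y. y \<in> S \<Longrightarrow> dist x w \<le> dist x y + 1/8 * dist y w"
    by (rule ekeland_frontier_point[OF closed xbar \<open>x \<notin> S\<close>, of "1/8"]) auto
  define D where "D = dist x w"
  have "(16 * \<tau> + 1) * \<alpha> = 16 * \<tau> * \<alpha> + \<alpha>" by (simp add: algebra_simps)
  moreover have "0 < 16 * \<tau> * \<alpha>" using \<tau> x(3) by simp
  ultimately have D: "0 < D \<and> 16 * \<tau> * \<alpha> < D \<and> \<alpha> < D"
    using far dist_w(1) x(3) unfolding D_def by linarith
  then have D: "0 < D" "16 * \<tau> * \<alpha> < D" "\<alpha> < D" by auto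
  have "D \<le> 2 * dist x xbar" using dist_w(2) infdist_le[OF xbar, of x] unfolding D_def by linarith
  then have "dist xbar w < 3 / 4 * \<delta>"
    using x(1) dist_triangle[of xbar w x] dist_commute[of x xbar] unfolding D_def by linarith
  have \<phi>w: "\<phi> w = 0" using wfr frontier by auto
  define TE where "TE = bouligand_cone (epigraph \<phi>) (w, 0)"
  have \<delta>: "\<delta> > 0" using x(1) zero_le_dist[of xbar x] by linarith
  have pe: "(x, \<alpha>) \<in> epigraph \<phi>" using x(2) by (simp add: epigraph_def)
  have qe: "(w, 0) \<in> epigraph \<phi>" using \<phi>w by (simp add: epigraph_def)
  have "N ((x, \<alpha>) - (xbar, 0)) = dist xbar x + \<alpha>" using x(3) by (simp add: N_def dist_norm norm_minus_commute)
  then have "N ((x, \<alpha>) - (xbar, 0)) < \<delta>" using x(1,4) zero_le_dist[of xbar x] by linarith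
  moreover have "N ((w, 0) - (xbar, 0)) < \<delta>"
    using \<open>dist xbar w < 3 / 4 * \<delta>\<close> \<delta> by (simp add: N_def dist_norm norm_minus_commute)
  ultimately have "(INF v\<in>TE. N ((x, \<alpha>) - (w, 0) - v)) \<le> \<epsilon> * N ((x, \<alpha>) - (w, 0))"
    unfolding TE_def \<epsilon>_def by (rule epi[OF pe qe])
  also have "\<dots> = \<epsilon> * (D + \<alpha>)" using x(3) by (simp add: N_def D_def dist_norm)
  also have "\<dots> < \<epsilon> * (3 * D)" using \<epsilon>(1) D by (intro mult_strict_left_mono) auto
  finally have INF_lt: "(INF v\<in>TE. N ((x, \<alpha>) - (w, 0) - v)) < 3 * \<epsilon> * D" by simp
  have "TE \<noteq> {}" using bouligand_cone_zero[OF qe] by (auto simp: TE_def)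
  then obtain kg where "kg \<in> TE" "N ((x, \<alpha>) - (w, 0) - kg) < 3 * \<epsilon> * D"
    by (rule cINF_less_nonnegE[OF INF_lt]) (auto simp: N_def case_prod_beta)
  then obtain k g where kg: "(k, g) \<in> TE" "norm (x - w - k) + \<bar>\<alpha> - g\<bar> < 3 * \<epsilon> * D"
    by (cases kg) (simp add: N_def)
  obtain v where v: "v \<in> bouligand_cone S w" "norm (k - v) < 2 * \<tau> * (\<alpha> + 3 * \<epsilon> * D)"
  proof (rule sublevel_tangent_near_epigraph_tangent[OF \<phi>w kg(1)[unfolded TE_def] _ _ \<tau>])
    show "g \<le> \<alpha> + 3 * \<epsilon> * D"
      using kg(2) abs_ge_minus_self[of "\<alpha> - g"] norm_ge_zero[of "x - w - k"] by linarith
    show "\<alpha> + 3 * \<epsilon> * D > 0" using x(3) mult_pos_pos[OF \<epsilon>(1) D(1)] by linarith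
    show "excess {h. hadamard_lower \<phi> w h \<le> 1} (bouligand_cone (sublevel0 \<phi>) w) \<le> ereal \<tau>"
      using excess[OF wfr] \<open>dist xbar w < 3 / 4 * \<delta>\<close> \<delta> by (simp add: S_def)
  qed (auto simp: S_def)
  have "norm (x - w - v) \<le> norm (x - w - k) + norm (k - v)"
    using norm_triangle_ineq[of "x - w - k" "k - v"] by simp
  also have "\<dots> < 3 * \<epsilon> * D + 2 * \<tau> * (\<alpha> + 3 * \<epsilon> * D)" using kg(2) v(2) by linarith
  also have "\<dots> = \<epsilon> * (3 + 6 * \<tau>) * D + 2 * \<tau> * \<alpha>" by (simp add: algebra_simps)
  also have "\<dots> \<le> 6 / 32 * D + 4 / 32 * D"
  proof -
    have "\<epsilon> * (3 + 6 * \<tau>) * D \<le> 6 / 32 * D" using mult_right_mono[OF \<epsilon>(2), of D] D(1) by simp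
    moreover have "2 * \<tau> * \<alpha> = (16 * \<tau> * \<alpha>) / 8" by simp
    ultimately show ?thesis using D(2) by linarith
  qed
  finally have "norm (x - w - v) < 10 / 32 * D" by simp
  moreover have "7 / 8 * D \<le> 9 / 8 * norm (x - w - v)"
    using ekeland_point_tangent_bound[OF ek _ v(1)] by (simp add: D_def)
  ultimately show False using D(1) by linarith
qed

lemma local_error_bound_of_tangent_excess_bound:
  fixes \<phi> :: "'a::banach \<Rightarrow> ereal"
  assumes lsc: "lsc_fun \<phi>" and xbar: "xbar \<in> sublevel0 \<phi>"
    and frontier: "frontier (sublevel0 \<phi>) \<subseteq> \<phi> -` {0}" and epi: "epi_shapiro_at \<phi> xbar"
    and \<tau>: "\<tau> > 0" and r: "r > 0"
    and excess: "\<forall>x\<in>frontier (sublevel0 \<phi>) \<inter> ball xbar r.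
      excess {h. hadamard_lower \<phi> x h \<le> 1} (bouligand_cone (sublevel0 \<phi>) x) \<le> ereal \<tau>"
  shows "local_error_bound \<phi> xbar"
proof (cases "xbar \<in> interior (sublevel0 \<phi>)")
  case True
  then show ?thesis by (rule local_error_bound_of_interior)
next
  case False
  have closed: "closed (sublevel0 \<phi>)" using lsc by (rule closed_sublevel0)
  with xbar False have "xbar \<in> frontier (sublevel0 \<phi>)" by (simp add: frontier_def)
  with frontier have "\<phi> xbar = 0" by auto
  have "shapiro_at_wrt (\<lambda>(y, a). norm y + \<bar>a\<bar>) (epigraph \<phi>) (xbar, 0)"
    using epi \<open>\<phi> xbar = 0\<close> by (simp add: epi_shapiro_at_def)
  moreover have "1 / (32 * (1 + \<tau>)) > 0" using \<tau> by simp
  ultimately obtain \<delta> where \<delta>: "\<delta> > 0" and epi_estimate: "\<forall>p\<in>epigraph \<phi>. \<forall>q\<in>epigraph \<phi>.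
      (\<lambda>(y, a). norm y + \<bar>a\<bar>) (p - (xbar, 0)) < \<delta> \<longrightarrow> (\<lambda>(y, a). norm y + \<bar>a\<bar>) (q - (xbar, 0)) < \<delta> \<longrightarrow>
      (INF v\<in>bouligand_cone (epigraph \<phi>) q. (\<lambda>(y, a). norm y + \<bar>a\<bar>) (p - q - v))
        \<le> 1 / (32 * (1 + \<tau>)) * (\<lambda>(y, a). norm y + \<bar>a\<bar>) (p - q)"
    unfolding shapiro_at_wrt_def by blast
  define \<delta>' where "\<delta>' = min \<delta> r"
  have \<delta>': "\<delta>' > 0" "\<delta>' \<le> \<delta>" "\<delta>' \<le> r" using \<delta> r by (auto simp: \<delta>'_def)
  show ?thesis
  proof (rule local_error_bound_of_small_values[OF xbar, of "\<delta>' / 4" "\<delta>' / 2" "16 * \<tau> + 1"])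
    show "\<delta>' / 4 > 0" "\<delta>' / 2 > 0" "16 * \<tau> + 1 > 0" using \<delta>' \<tau> by auto
    show "infdist x (sublevel0 \<phi>) \<le> (16 * \<tau> + 1) * \<alpha>"
      if "x \<in> ball xbar (\<delta>' / 4)" "\<phi> x = ereal \<alpha>" "0 < \<alpha>" "\<alpha> < \<delta>' / 2" for x \<alpha>
    proof (rule infdist_sublevel0_le_of_epi_shapiro[OF closed frontier xbar \<tau>])
      show "excess {h. hadamard_lower \<phi> w h \<le> 1} (bouligand_cone (sublevel0 \<phi>) w) \<le> ereal \<tau>"
        if "w \<in> frontier (sublevel0 \<phi>)" "dist xbar w < \<delta>'" for w
        using excess that \<delta>'(3) by auto
    qed (use that \<delta>'(2) epi_estimate in \<open>auto\<close>)
  qed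
qed

theorem theorem4p1:
  fixes \<phi> :: "'a::banach \<Rightarrow> ereal" and xbar :: 'a
  assumes proper: "proper_fun \<phi>" and lsc: "lsc_fun \<phi>"
    and xbar: "xbar \<in> sublevel0 \<phi>"
  shows "(shapiro_around (sublevel0 \<phi>) xbar \<and> local_error_bound \<phi> xbar \<longrightarrow>
           (\<exists>\<tau>>0. \<exists>r>0. \<forall>x\<in>sublevel0 \<phi> \<inter> ball xbar r. \<phi> x = 0 \<longrightarrow>
              excess {h. hadamard_lower \<phi> x h \<le> 1} (bouligand_cone (sublevel0 \<phi>) x) \<le> ereal \<tau>))
       \<and> (frontier (sublevel0 \<phi>) \<subseteq> \<phi> -` {0} \<and> epi_shapiro_at \<phi> xbar \<and>
           (\<exists>\<tau>>0. \<exists>r>0. \<forall>x\<in>frontier (sublevel0 \<phi>) \<inter> ball xbar r.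
              excess {h. hadamard_lower \<phi> x h \<le> 1} (bouligand_cone (sublevel0 \<phi>) x) \<le> ereal \<tau>)
           \<longrightarrow> local_error_bound \<phi> xbar)"
  using tangent_excess_bound_of_error_bound local_error_bound_of_tangent_excess_bound[OF lsc xbar]
  by blast

end
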